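(* Let $H=(H^1,\dots,H^m):\mathbb{R}^d\to\mathbb{R}^m$ be such that for each $i$ there are convex functions $H^i_1,H^i_2:\mathbb{R}^d\to\mathbb{R}$ with $H^i=H^i_1-H^i_2$, and set $G:=\sum_{i=1}^m(H^i_1+H^i_2)$. Assume that $\gamma>0$, $A$ is a positive definite symmetric $d\times d$ matrix, and $L:\mathbb{R}^d\to\mathbb{R}$ satisfies $D^2L\ge A$ in the sense of distributions. For $(x,\tau)\in\mathbb{R}^d\times\mathbb{R}^m$ define \[\Phi(x,\tau):=\sup_{p\in\mathbb{R}^d}\Big\{p\cdot x-L(p)-\gamma G(p)+\sum_{i=1}^m\tau_iH^i(p)\Big\}.\] Then $\Phi\in C^{1,1}(\mathbb{R}^d\times(-\gamma,\gamma)^m)$, $0\le D_x^2\Phi\le A^{-1}$ in the sense of distributions, and \[\partial_{\tau_i}\Phi(x,\tau)=H^i(D_x\Phi(x,\tau))\quad\text{for } i=1,\dots,m,\ (x,\tau)\in\mathbb{R}^d\times(-\gamma,\gamma)^m.\] *)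

theory Defs
  imports "HOL-Analysis.Analysis"
begin

text \<open>Hessian bound "D^2 L \<ge> A" (in the sense of distributions) for a function on R^d,
  read for the (continuous) function L as: p \<mapsto> L p - (1/2) p.Ap is convex.\<close>
definition hess_ge :: "(real^'d \<Rightarrow> real) \<Rightarrow> real^'d^'d \<Rightarrow> bool" where
  "hess_ge L A \<longleftrightarrow> convex_on UNIV (\<lambda>p. L p - (1/2) * (p \<bullet> (A *v p)))"

definition hess_le :: "(real^'d \<Rightarrow> real) \<Rightarrow> real^'d^'d \<Rightarrow> bool" where
  "hess_le f A \<longleftrightarrow> convex_on UNIV (\<lambda>p. (1/2) * (p \<bullet> (A *v p)) - f p)"

definition C11_on :: "'a::euclidean_space set \<Rightarrow> ('a \<Rightarrow> real) \<Rightarrow> bool" where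
  "C11_on S f \<longleftrightarrow> (\<exists>g. (\<forall>z\<in>S. (f has_derivative (\<lambda>h. g z \<bullet> h)) (at z)) \<and>
      (\<forall>z\<in>S. \<exists>e>0. \<exists>C. lipschitz_on C (ball z e \<inter> S) g))"

definition Phi :: "(real^'d \<Rightarrow> real) \<Rightarrow> real \<Rightarrow> (real^'d \<Rightarrow> real) \<Rightarrow> ('m::finite \<Rightarrow> real^'d \<Rightarrow> real)
    \<Rightarrow> real^'d \<Rightarrow> real^'m \<Rightarrow> real" where
  "Phi L \<gamma> G H x \<tau> = (SUP p. p \<bullet> x - L p - \<gamma> * G p + (\<Sum>i\<in>UNIV. \<tau> $ i * H i p))"

end

theory Submission
  imports Defs
begin

(* Write the objective as p.x - quad(p) - K_tau(p) with quad(p) = p.Ap/2 and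
   K_tau = (L - quad) + sum_i ((gamma - tau_i) H1_i + (gamma + tau_i) H2_i), which is convex for
   tau in (-gamma, gamma)^m.  So the supremum is attained, and a maximizer p(x,tau) beats every q
   by at least quad(q - p).  In z = (x,tau) the objective is the affine function psi(p).z - E(p) with
   psi(p) = (p, H(p)); adding the quadratic margins at two maximizers gives
   2 quad(p' - p) <= (psi(p') - psi(p)).(z' - z), and as psi is locally Lipschitz (its components
   are differences of convex functions), so is z |-> p(z).  A maximum of affine functions whose
   maximizers move in a Lipschitz way is differentiable with gradient psi(p(z)); this gives the
   C^{1,1} regularity and the formula for the tau-derivatives.  Finally, in x alone,
   Phi(x) + p.(y - x) <= Phi(y) <= Phi(x) + p.(y - x) + (y - x).A^{-1}(y - x)/2, the upper bound
   coming from the quadratic margin and the Fenchel-Young inequality for quad; these supporting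
   bounds give convexity and D^2 Phi <= A^{-1}. *)

section \<open>Convex functions\<close>

lemma convex_on_sum_fun:
  assumes "finite I" "convex S" "\<And>i. i \<in> I \<Longrightarrow> convex_on S (f i)"
  shows "convex_on S (\<lambda>x. \<Sum>i\<in>I. f i x)"
  using assms by (induction I rule: finite_induct) (auto simp: convex_on_const intro!: convex_on_add)

lemma convex_on_bounded_cball:
  fixes f :: "'a::euclidean_space \<Rightarrow> real"
  assumes "convex_on UNIV f"
  obtains M where "M \<ge> 0" "\<And>q. norm q \<le> r \<Longrightarrow> \<bar>f q\<bar> \<le> M"
proof -
  have "continuous_on (cball 0 r) f"
    using convex_on_continuous[OF open_UNIV assms] continuous_on_subset by blast
  then have "bounded (f ` cball 0 r)"
    by (intro compact_imp_bounded compact_continuous_image compact_cball)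
  then obtain M where "\<forall>q\<in>cball 0 r. \<bar>f q\<bar> \<le> M"
    unfolding bounded_iff by auto
  then show ?thesis
    by (intro that[of "max M 0"]) (auto simp: le_max_iff_disj)
qed

lemma convex_on_extrapolation:
  fixes f :: "'a::real_vector \<Rightarrow> real"
  assumes "convex_on UNIV f" and "d > 0"
  shows "(1 + d) * f p \<le> f q + d * f (p + (1 / d) *\<^sub>R (p - q))"
proof -
  define r where "r = p + (1 / d) *\<^sub>R (p - q)"
  have "1 + d \<noteq> 0" using assms(2) by simp
  have t: "0 \<le> d / (1 + d)" "d / (1 + d) \<le> 1" using assms(2) by auto
  have one: "1 / (1 + d) + d / (1 + d) = 1"
    using assms(2) by (simp flip: add_divide_distrib)
  have "(1 - d / (1 + d)) *\<^sub>R q + (d / (1 + d)) *\<^sub>R r = p"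
    using assms(2) by (simp add: r_def field_simps) (simp add: algebra_simps one flip: scaleR_add_left)
  then have "f p \<le> (1 - d / (1 + d)) * f q + (d / (1 + d)) * f r"
    using convex_onD[OF assms(1) t] by (metis UNIV_I)
  then have "(1 + d) * f p \<le> (1 + d) * ((1 - d / (1 + d)) * f q + (d / (1 + d)) * f r)"
    using assms(2) by (intro mult_left_mono) auto
  also have "\<dots> = ((1 + d) * (1 - d / (1 + d))) * f q + ((1 + d) * (d / (1 + d))) * f r"
    by (simp only: distrib_left mult.assoc)
  also have "\<dots> = f q + d * f r"
    using \<open>1 + d \<noteq> 0\<close> by (simp add: right_diff_distrib)
  finally show ?thesis by (simp add: r_def)
qed

lemma convex_on_lower_bound_linear:
  fixes f :: "'a::euclidean_space \<Rightarrow> real"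
  assumes "convex_on UNIV f"
  obtains c where "c \<ge> 0" "\<And>p. f 0 - c * norm p \<le> f p"
proof -
  obtain M where M: "M \<ge> 0" "\<And>q. norm q \<le> 1 \<Longrightarrow> \<bar>f q\<bar> \<le> M"
    using convex_on_bounded_cball[OF assms] by blast
  have "f 0 - 2 * M * norm p \<le> f p" for p
  proof (cases "p = 0")
    case False
    define n where "n = norm p"
    have n: "n > 0" using False by (simp add: n_def)
    define r where "r = (1 / n) *\<^sub>R (- p)"
    have "norm r \<le> 1" using n by (simp add: r_def n_def)
    then have "\<bar>f r\<bar> \<le> M" "\<bar>f 0\<bar> \<le> M" using M(2) by auto
    then have r: "f r - f 0 \<le> 2 * M" by linarith
    moreover have "(1 + n) * f 0 \<le> f p + n * f r"
      using convex_on_extrapolation[OF assms n, of 0 p] by (simp add: r_def)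
    moreover have "n * (f r - f 0) \<le> n * (2 * M)"
      using n r by (intro mult_left_mono) auto
    ultimately show ?thesis
      by (simp add: n_def[symmetric] algebra_simps)
  qed simp
  then show ?thesis using that[of "2 * M"] M(1) by simp
qed

lemma convex_on_lipschitz_on_cball:
  fixes f :: "'a::euclidean_space \<Rightarrow> real"
  assumes "convex_on UNIV f"
  obtains C where "C-lipschitz_on (cball 0 R) f"
proof -
  obtain M where M: "M \<ge> 0" "\<And>q. norm q \<le> \<bar>R\<bar> + 1 \<Longrightarrow> \<bar>f q\<bar> \<le> M"
    using convex_on_bounded_cball[OF assms] by blast
  have slope: "f p - f q \<le> 2 * M * dist p q" if "norm p \<le> R" "norm q \<le> R" for p q
  proof (cases "p = q")
    case False
    define d where "d = norm (p - q)"
    have d: "d > 0" using False by (simp add: d_def)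
    define r where "r = p + (1 / d) *\<^sub>R (p - q)"
    have "norm r \<le> norm p + norm ((1 / d) *\<^sub>R (p - q))"
      unfolding r_def by (rule norm_triangle_ineq)
    also have "norm ((1 / d) *\<^sub>R (p - q)) = 1" using d by (simp add: d_def)
    finally have "\<bar>f r\<bar> \<le> M" "\<bar>f p\<bar> \<le> M" using M(2) that by auto
    then have r: "f r - f p \<le> 2 * M" by linarith
    moreover have "(1 + d) * f p \<le> f q + d * f r"
      using convex_on_extrapolation[OF assms d] by (simp add: r_def)
    moreover have "d * (f r - f p) \<le> d * (2 * M)"
      using d r by (intro mult_left_mono) auto
    ultimately show ?thesis
      by (simp add: dist_norm d_def[symmetric] algebra_simps)
  qed simp
  have "(2 * M)-lipschitz_on (cball 0 R) f"
  proof (rule lipschitz_onI)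
    fix p q :: 'a assume "p \<in> cball 0 R" "q \<in> cball 0 R"
    then show "dist (f p) (f q) \<le> 2 * M * dist p q"
      using slope[of p q] slope[of q p] by (simp add: dist_real_def dist_commute)
  qed (use M(1) in simp)
  then show ?thesis by (rule that)
qed

lemma convex_on_supportingI:
  fixes f :: "'a::real_inner \<Rightarrow> real"
  assumes "\<And>x y. f x + g x \<bullet> (y - x) \<le> f y"
  shows "convex_on UNIV f"
proof (rule convex_onI)
  fix t :: real and x y :: 'a assume t: "0 < t" "t < 1"
  define z where "z = (1 - t) *\<^sub>R x + t *\<^sub>R y"
  have "(1 - t) * (f z + g z \<bullet> (x - z)) + t * (f z + g z \<bullet> (y - z)) \<le> (1 - t) * f x + t * f y"
    using t assms[of z x] assms[of z y] by (intro add_mono mult_left_mono) auto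
  moreover have "(1 - t) * (f z + g z \<bullet> (x - z)) + t * (f z + g z \<bullet> (y - z)) =
      f z + g z \<bullet> ((1 - t) *\<^sub>R (x - z) + t *\<^sub>R (y - z))"
    by (simp add: inner_add_right algebra_simps)
  moreover have "(1 - t) *\<^sub>R (x - z) + t *\<^sub>R (y - z) = 0"
    by (simp add: z_def algebra_simps)
  ultimately show "f ((1 - t) *\<^sub>R x + t *\<^sub>R y) \<le> (1 - t) * f x + t * f y"
    by (simp add: z_def)
qed simp

lemma lipschitz_on_vec_lambda:
  fixes f :: "'i::finite \<Rightarrow> 'a::metric_space \<Rightarrow> real"
  assumes "\<And>i. (C i)-lipschitz_on U (f i)"
  shows "(\<Sum>i\<in>UNIV. C i)-lipschitz_on U (\<lambda>x. \<chi> i. f i x)"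
proof (rule lipschitz_onI)
  fix x y assume "x \<in> U" "y \<in> U"
  then have "\<bar>f i x - f i y\<bar> \<le> C i * dist x y" for i
    using lipschitz_onD[OF assms] by (simp add: dist_real_def)
  then have "(\<Sum>i\<in>UNIV. \<bar>f i x - f i y\<bar>) \<le> (\<Sum>i\<in>UNIV. C i) * dist x y"
    by (simp add: sum_distrib_right sum_mono)
  then show "dist (\<chi> i. f i x) (\<chi> i. f i y) \<le> (\<Sum>i\<in>UNIV. C i) * dist x y"
    using norm_le_l1_cart[of "(\<chi> i. f i x) - (\<chi> i. f i y)"] by (simp add: dist_norm)
next
  show "0 \<le> (\<Sum>i\<in>UNIV. C i)"
    using lipschitz_on_nonneg[OF assms] by (simp add: sum_nonneg)
qed

section \<open>Maxima of affine families\<close>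

lemma max_affine_increment_bounds:
  fixes \<psi> :: "'p \<Rightarrow> 'a::real_inner"
  assumes "\<And>q. \<psi> q \<bullet> z - E q \<le> \<psi> p \<bullet> z - E p"
    and "\<And>q. \<psi> q \<bullet> z' - E q \<le> \<psi> p' \<bullet> z' - E p'"
  shows "\<psi> p \<bullet> (z' - z) \<le> (\<psi> p' \<bullet> z' - E p') - (\<psi> p \<bullet> z - E p)"
    and "(\<psi> p' \<bullet> z' - E p') - (\<psi> p \<bullet> z - E p) \<le> \<psi> p' \<bullet> (z' - z)"
  using assms(1)[of p'] assms(2)[of p] by (simp_all add: inner_diff_right)

lemma has_derivative_if_quadratic_remainder:
  fixes F :: "'a::real_inner \<Rightarrow> real"
  assumes "open U" "z \<in> U"
    and remainder: "\<And>w. w \<in> U \<Longrightarrow> \<bar>F w - F z - g \<bullet> (w - z)\<bar> \<le> M * (norm (w - z))\<^sup>2"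
  shows "(F has_derivative (\<lambda>h. g \<bullet> h)) (at z)"
  unfolding has_derivative_at_alt
proof (intro conjI allI impI)
  show "bounded_linear (\<lambda>h. g \<bullet> h)" by (rule bounded_linear_inner_right)
  fix e :: real assume e: "e > 0"
  obtain r where r: "r > 0" "ball z r \<subseteq> U"
    using assms(1,2) open_contains_ball by blast
  define d where "d = min r (e / (\<bar>M\<bar> + 1))"
  have "d > 0" using e r by (simp add: d_def)
  moreover have "norm (F w - F z - g \<bullet> (w - z)) \<le> e * norm (w - z)" if w: "norm (w - z) < d" for w
  proof -
    have "w \<in> U" using w r by (auto simp: d_def dist_norm norm_minus_commute)
    have "\<bar>M\<bar> * norm (w - z) \<le> (\<bar>M\<bar> + 1) * (e / (\<bar>M\<bar> + 1))"
      using w by (intro mult_mono) (auto simp: d_def)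
    then have small: "\<bar>M\<bar> * norm (w - z) \<le> e" by simp
    have "\<bar>F w - F z - g \<bullet> (w - z)\<bar> \<le> M * (norm (w - z))\<^sup>2" by (rule remainder[OF \<open>w \<in> U\<close>])
    also have "\<dots> \<le> (\<bar>M\<bar> * norm (w - z)) * norm (w - z)"
      unfolding power2_eq_square mult.assoc[symmetric] by (intro mult_right_mono) auto
    also have "\<dots> \<le> e * norm (w - z)" using small by (intro mult_right_mono) auto
    finally show ?thesis by simp
  qed
  ultimately show "\<exists>d>0. \<forall>w. norm (w - z) < d \<longrightarrow> norm (F w - F z - g \<bullet> (w - z)) \<le> e * norm (w - z)"
    by blast
qed

lemma max_affine_has_derivative:
  fixes \<psi> :: "'p \<Rightarrow> 'a::real_inner" and P :: "'a \<Rightarrow> 'p"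
  assumes "open U" "z \<in> U" and lip: "M-lipschitz_on U (\<lambda>w. \<psi> (P w))"
    and max: "\<And>w q. w \<in> U \<Longrightarrow> \<psi> q \<bullet> w - E q \<le> \<psi> (P w) \<bullet> w - E (P w)"
  shows "((\<lambda>w. \<psi> (P w) \<bullet> w - E (P w)) has_derivative (\<lambda>h. \<psi> (P z) \<bullet> h)) (at z)"
proof (rule has_derivative_if_quadratic_remainder[OF assms(1,2)])
  fix w assume "w \<in> U"
  note bounds = max_affine_increment_bounds[where \<psi> = \<psi> and E = E,
      OF max[OF \<open>z \<in> U\<close>] max[OF \<open>w \<in> U\<close>]]
  have "(\<psi> (P w) - \<psi> (P z)) \<bullet> (w - z) \<le> norm (\<psi> (P w) - \<psi> (P z)) * norm (w - z)"
    by (rule norm_cauchy_schwarz)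
  also have "\<dots> \<le> M * norm (w - z) * norm (w - z)"
    using lipschitz_on_normD[OF lip \<open>w \<in> U\<close> \<open>z \<in> U\<close>] by (intro mult_right_mono) auto
  finally show "\<bar>(\<psi> (P w) \<bullet> w - E (P w)) - (\<psi> (P z) \<bullet> z - E (P z)) - \<psi> (P z) \<bullet> (w - z)\<bar>
      \<le> M * (norm (w - z))\<^sup>2"
    using bounds by (simp add: power2_eq_square inner_diff_left mult.assoc)
qed

lemma has_derivative_Pair_slices:
  fixes F :: "'a::real_inner \<times> 'b::real_inner \<Rightarrow> real"
  assumes "(F has_derivative (\<lambda>h. (a, b) \<bullet> h)) (at (x, y))"
  shows "((\<lambda>x'. F (x', y)) has_derivative (\<lambda>h. a \<bullet> h)) (at x)"
    and "((\<lambda>t. F (x, y + t *\<^sub>R v)) has_real_derivative b \<bullet> v) (at 0)"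
proof -
  have "((\<lambda>x'. (x', y)) has_derivative (\<lambda>h. (h, 0))) (at x)"
    by (intro derivative_eq_intros) auto
  from has_derivative_compose[OF this assms]
  show "((\<lambda>x'. F (x', y)) has_derivative (\<lambda>h. a \<bullet> h)) (at x)"
    by simp
  have "((\<lambda>t. (x, y + t *\<^sub>R v)) has_derivative (\<lambda>t. (0, t *\<^sub>R v))) (at 0)"
    by (intro derivative_eq_intros) auto
  moreover have "(F has_derivative (\<lambda>h. (a, b) \<bullet> h)) (at (x, y + 0 *\<^sub>R v))"
    using assms by simp
  ultimately have "((\<lambda>t. F (x, y + t *\<^sub>R v)) has_derivative (\<lambda>t. (a, b) \<bullet> (0, t *\<^sub>R v))) (at 0)"
    by (rule has_derivative_compose)
  moreover have "(\<lambda>t. (a, b) \<bullet> (0, t *\<^sub>R v)) = (*) (b \<bullet> v)"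
    by (auto simp: fun_eq_iff)
  ultimately show "((\<lambda>t. F (x, y + t *\<^sub>R v)) has_real_derivative b \<bullet> v) (at 0)"
    by (simp add: has_field_derivative_def)
qed

section \<open>Symmetric positive definite quadratic forms\<close>

lemma nonpos_if_le_scaled:
  fixes a c :: real
  assumes "\<And>t. 0 < t \<Longrightarrow> t < 1 \<Longrightarrow> a \<le> t * c"
  shows "a \<le> 0"
proof -
  have "((\<lambda>t. t * c) \<longlongrightarrow> 0 * c) (at_right 0)"
    by (intro tendsto_intros)
  moreover have "\<forall>\<^sub>F t in at_right 0. a \<le> t * c"
    using eventually_at_right_real[of 0 1] assms by (auto elim: eventually_mono)
  ultimately show ?thesis
    by (intro tendsto_lowerbound[of "\<lambda>t. t * c" _ "at_right (0::real)"]) auto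
qed

lemma inner_matrix_vector_expand:
  fixes B :: "real^'n^'n"
  shows "y \<bullet> (B *v y) = x \<bullet> (B *v x) + (B *v x + x v* B) \<bullet> (y - x) + (y - x) \<bullet> (B *v (y - x))"
proof -
  have "(x v* B) \<bullet> (y - x) = x \<bullet> (B *v (y - x))" by (rule dot_lmul_matrix)
  then show ?thesis
    by (simp add: inner_add_left inner_diff_left inner_diff_right matrix_vector_mult_diff_distrib
        inner_commute[of "B *v x"] algebra_simps)
qed

locale spd_matrix =
  fixes A :: "real^'n^'n"
  assumes symmetric: "transpose A = A"
    and posdef: "\<And>v. v \<noteq> 0 \<Longrightarrow> v \<bullet> (A *v v) > 0"
begin

definition quad :: "real^'n \<Rightarrow> real" where
  "quad v = (1/2) * (v \<bullet> (A *v v))"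

lemma inner_matrix_commute: "u \<bullet> (A *v w) = w \<bullet> (A *v u)"
proof -
  have "u \<bullet> (A *v w) = (transpose A *v u) \<bullet> w"
    by (simp add: dot_lmul_matrix[symmetric])
  then show ?thesis by (simp add: symmetric inner_commute)
qed

lemma quad_nonneg: "0 \<le> quad v"
  using posdef[of v] by (cases "v = 0") (auto simp: quad_def)

lemma quad_uminus: "quad (- v) = quad v"
  by (simp add: quad_def matrix_vector_mult_scaleR[of A "-1" v, simplified])

lemma quad_scaleR: "quad (c *\<^sub>R v) = c\<^sup>2 * quad v"
  by (simp add: quad_def matrix_vector_mult_scaleR power2_eq_square)

lemma quad_add_scaled: "quad (p + t *\<^sub>R d) = quad p + t * (d \<bullet> (A *v p)) + t\<^sup>2 * quad d"
  using inner_matrix_commute[of p d]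
  by (simp add: quad_def matrix_vector_right_distrib matrix_vector_mult_scaleR inner_add_left
      inner_add_right power2_eq_square algebra_simps)

lemma quad_coercive: obtains a where "a > 0" "\<And>v. a * (norm v)\<^sup>2 \<le> quad v"
proof -
  have "continuous_on (sphere 0 1) (\<lambda>v. v \<bullet> (A *v v))"
    by (intro continuous_intros linear_continuous_on matrix_vector_mul_bounded_linear)
  moreover have "sphere (0::real^'n) 1 \<noteq> {}" by simp
  ultimately obtain u where u: "u \<in> sphere 0 1" "\<And>v. v \<in> sphere 0 1 \<Longrightarrow> u \<bullet> (A *v u) \<le> v \<bullet> (A *v v)"
    using continuous_attains_inf[OF compact_sphere] by blast
  define a where "a = (1/2) * (u \<bullet> (A *v u))"
  have "u \<noteq> 0" using u(1) by auto
  then have "a > 0" using posdef[of u] by (simp add: a_def)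
  moreover have "a * (norm v)\<^sup>2 \<le> quad v" for v
  proof (cases "v = 0")
    case False
    define w where "w = (1 / norm v) *\<^sub>R v"
    have "w \<in> sphere 0 1" using False by (simp add: w_def)
    have "v = norm v *\<^sub>R w" using False by (simp add: w_def)
    then have "quad v = (norm v)\<^sup>2 * quad w"
      by (metis quad_scaleR)
    moreover have "a \<le> quad w" using u(2)[OF \<open>w \<in> sphere 0 1\<close>] by (simp add: a_def quad_def)
    ultimately show ?thesis by (simp add: mult_right_mono mult.commute)
  qed (simp add: quad_def)
  ultimately show ?thesis by (rule that)
qed

lemma matrix_inv_right: "A ** matrix_inv A = mat 1"
proof -
  have "inj ((*v) A)"
  proof (rule injI)
    fix u w assume "A *v u = A *v w"
    then have "A *v (u - w) = 0" by (simp add: matrix_vector_mult_diff_distrib)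
    then show "u = w" using posdef[of "u - w"] by auto
  qed
  then obtain B where "B ** A = mat 1" using matrix_left_invertible_injective by blast
  then have "invertible A" using invertible_left_inverse by blast
  then show ?thesis
    unfolding invertible_def matrix_inv_def by (rule someI2_ex) blast
qed

text \<open>Fenchel-Young inequality: the Legendre transform of \<open>quad\<close> is \<open>v \<mapsto> (1/2) v \<bullet> A\<^sup>-\<^sup>1 v\<close>.\<close>
lemma inner_minus_quad_le: "d \<bullet> v - quad d \<le> (1/2) * (v \<bullet> (matrix_inv A *v v))"
proof -
  define u where "u = matrix_inv A *v v"
  have Au: "A *v u = v" using matrix_inv_right by (simp add: u_def matrix_vector_mul_assoc)
  have "0 \<le> quad (d + (-1) *\<^sub>R u)" by (rule quad_nonneg)
  also have "\<dots> = quad d - u \<bullet> (A *v d) + quad u"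
    using quad_add_scaled[of d "-1" u] by simp
  also have "u \<bullet> (A *v d) = d \<bullet> v" using inner_matrix_commute[of u d] Au by simp
  also have "quad u = (1/2) * (v \<bullet> u)" unfolding quad_def Au by (simp add: inner_commute)
  finally show ?thesis by (simp add: u_def)
qed

text \<open>Compare with the values on the segment from \<open>p\<close> towards \<open>q\<close> and let the step tend to \<open>0\<close>.\<close>
lemma quad_growth_at_max:
  assumes "convex_on UNIV K"
    and max: "\<And>q. q \<bullet> x - quad q - K q \<le> p \<bullet> x - quad p - K p"
  shows "q \<bullet> x - quad q - K q \<le> p \<bullet> x - quad p - K p - quad (q - p)"
proof -
  define d where "d = q - p"
  define slope where "slope = d \<bullet> x - d \<bullet> (A *v p) - K q + K p"
  have "slope \<le> t * quad d" if t: "0 < t" "t < 1" for t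
  proof -
    have "(1 - t) *\<^sub>R p + t *\<^sub>R q = p + t *\<^sub>R d" by (simp add: d_def algebra_simps)
    then have "K (p + t *\<^sub>R d) \<le> (1 - t) * K p + t * K q"
      using convex_onD[OF assms(1), of t p q] t by simp
    moreover have "(p + t *\<^sub>R d) \<bullet> x - quad (p + t *\<^sub>R d) - K (p + t *\<^sub>R d) \<le> p \<bullet> x - quad p - K p"
      by (rule max)
    ultimately have "t * slope \<le> t * (t * quad d)"
      by (simp add: slope_def quad_add_scaled inner_add_left algebra_simps power2_eq_square)
    then show ?thesis using t by simp
  qed
  then have "slope \<le> 0" by (rule nonpos_if_le_scaled)
  moreover have "quad q = quad p + d \<bullet> (A *v p) + quad d"
    using quad_add_scaled[of p 1 d] by (simp add: d_def)
  moreover have "q \<bullet> x = p \<bullet> x + d \<bullet> x" by (simp add: d_def inner_diff_left)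
  ultimately show ?thesis by (simp add: slope_def d_def[symmetric])
qed

end

section \<open>The value function\<close>

locale value_function = spd_matrix A
  for A :: "real^'d^'d" +
  fixes H H1 H2 :: "'m::finite \<Rightarrow> real^'d \<Rightarrow> real"
    and L G :: "real^'d \<Rightarrow> real"
    and \<gamma> :: real
  assumes H1_convex: "\<And>i. convex_on UNIV (H1 i)"
    and H2_convex: "\<And>i. convex_on UNIV (H2 i)"
    and H_def: "\<And>i p. H i p = H1 i p - H2 i p"
    and G_def: "\<And>p. G p = (\<Sum>i\<in>UNIV. H1 i p + H2 i p)"
    and L_hess: "hess_ge L A"
begin

definition taus :: "(real^'m) set" where
  "taus = {\<tau>. \<forall>i. -\<gamma> < \<tau> $ i \<and> \<tau> $ i < \<gamma>}"

definition objective :: "real^'d \<Rightarrow> real^'m \<Rightarrow> real^'d \<Rightarrow> real" where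
  "objective x \<tau> p = p \<bullet> x - L p - \<gamma> * G p + (\<Sum>i\<in>UNIV. \<tau> $ i * H i p)"

definition K :: "real^'m \<Rightarrow> real^'d \<Rightarrow> real" where
  "K \<tau> p = (L p - quad p) + (\<Sum>i\<in>UNIV. (\<gamma> - \<tau> $ i) * H1 i p + (\<gamma> + \<tau> $ i) * H2 i p)"

definition psi :: "real^'d \<Rightarrow> (real^'d) \<times> (real^'m)" where
  "psi p = (p, \<chi> i. H i p)"

definition E :: "real^'d \<Rightarrow> real" where
  "E p = L p + \<gamma> * G p"

lemma objective_eq_K: "objective x \<tau> p = p \<bullet> x - quad p - K \<tau> p"
  unfolding objective_def K_def G_def H_def
  by (simp add: sum_distrib_left algebra_simps sum.distrib sum_subtractf)

lemma objective_eq_psi: "objective x \<tau> p = psi p \<bullet> (x, \<tau>) - E p"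
  unfolding objective_def psi_def E_def by (simp add: inner_vec_def mult.commute)

lemma open_taus: "open taus"
proof -
  have "taus = box (\<chi> i. -\<gamma>) (\<chi> i. \<gamma>)" by (auto simp: taus_def mem_box_cart)
  then show ?thesis by (simp add: open_box)
qed

lemma K_convex:
  assumes "\<tau> \<in> taus"
  shows "convex_on UNIV (K \<tau>)"
proof -
  have "0 \<le> \<gamma> - \<tau> $ i" "0 \<le> \<gamma> + \<tau> $ i" for i
    using assms by (auto simp: taus_def less_imp_le dest: spec[of _ i])
  moreover have "convex_on UNIV (\<lambda>p. L p - quad p)"
    using L_hess by (simp add: hess_ge_def quad_def)
  ultimately show ?thesis
    unfolding K_def
    by (intro convex_on_add convex_on_sum_fun convex_on_cmul H1_convex H2_convex) auto
qed

lemma H1_H2_lower_bound: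
  obtains c where "\<And>i p. H1 i 0 - c i * norm p \<le> H1 i p" "\<And>i p. H2 i 0 - c i * norm p \<le> H2 i p"
proof -
  have "\<exists>c. \<forall>p. H1 i 0 - c * norm p \<le> H1 i p \<and> H2 i 0 - c * norm p \<le> H2 i p" for i
  proof -
    obtain c1 where c1: "c1 \<ge> 0" "\<And>p. H1 i 0 - c1 * norm p \<le> H1 i p"
      using convex_on_lower_bound_linear[OF H1_convex[of i]] by blast
    obtain c2 where c2: "c2 \<ge> 0" "\<And>p. H2 i 0 - c2 * norm p \<le> H2 i p"
      using convex_on_lower_bound_linear[OF H2_convex[of i]] by blast
    have "H1 i 0 - (c1 + c2) * norm p \<le> H1 i p \<and> H2 i 0 - (c1 + c2) * norm p \<le> H2 i p" for p
      using c1(2)[of p] c2(2)[of p] mult_right_mono[OF c1(1), of "norm p"]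
        mult_right_mono[OF c2(1), of "norm p"]
      by (simp add: distrib_right)
    then show ?thesis by blast
  qed
  then show ?thesis using that by metis
qed

text \<open>The weights \<open>\<gamma> \<mp> \<tau> $ i\<close> are nonnegative and add up to \<open>2 \<gamma>\<close>.\<close>
lemma K_lower_bound:
  obtains C where "\<And>\<tau> p. \<tau> \<in> taus \<Longrightarrow> K \<tau> 0 - C * norm p \<le> K \<tau> p"
proof -
  obtain c0 where c0: "\<And>p. (L 0 - quad 0) - c0 * norm p \<le> L p - quad p"
    using convex_on_lower_bound_linear L_hess unfolding hess_ge_def quad_def by blast
  obtain c where c: "\<And>i p. H1 i 0 - c i * norm p \<le> H1 i p" "\<And>i p. H2 i 0 - c i * norm p \<le> H2 i p"
    using H1_H2_lower_bound by metis
  have "K \<tau> 0 - (c0 + (\<Sum>i\<in>UNIV. 2 * \<gamma> * c i)) * norm p \<le> K \<tau> p" if "\<tau> \<in> taus" for \<tau> p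
  proof -
    have summand: "(\<gamma> - \<tau> $ i) * H1 i 0 + (\<gamma> + \<tau> $ i) * H2 i 0 - 2 * \<gamma> * c i * norm p
        \<le> (\<gamma> - \<tau> $ i) * H1 i p + (\<gamma> + \<tau> $ i) * H2 i p" for i
    proof -
      have "0 \<le> \<gamma> - \<tau> $ i" "0 \<le> \<gamma> + \<tau> $ i"
        using that by (auto simp: taus_def less_imp_le dest: spec[of _ i])
      then have "(\<gamma> - \<tau> $ i) * (H1 i 0 - c i * norm p) \<le> (\<gamma> - \<tau> $ i) * H1 i p"
        and "(\<gamma> + \<tau> $ i) * (H2 i 0 - c i * norm p) \<le> (\<gamma> + \<tau> $ i) * H2 i p"
        using c by (auto intro: mult_left_mono)
      then show ?thesis by (simp add: algebra_simps)
    qed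
    have "(\<Sum>i\<in>UNIV. (\<gamma> - \<tau> $ i) * H1 i 0 + (\<gamma> + \<tau> $ i) * H2 i 0) - (\<Sum>i\<in>UNIV. 2 * \<gamma> * c i) * norm p
        \<le> (\<Sum>i\<in>UNIV. (\<gamma> - \<tau> $ i) * H1 i p + (\<gamma> + \<tau> $ i) * H2 i p)"
      using sum_mono[of UNIV, OF summand] by (simp add: sum_subtractf sum_distrib_right)
    then show ?thesis
      using c0[of p] by (simp add: K_def algebra_simps)
  qed
  then show ?thesis by (rule that)
qed

lemma near_maximizers_bounded:
  obtains R where "R \<ge> 0"
    "\<And>x \<tau> p. norm x \<le> r \<Longrightarrow> \<tau> \<in> taus \<Longrightarrow> objective x \<tau> 0 \<le> objective x \<tau> p \<Longrightarrow> norm p \<le> R"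
proof -
  obtain C where C: "\<And>\<tau> p. \<tau> \<in> taus \<Longrightarrow> K \<tau> 0 - C * norm p \<le> K \<tau> p"
    using K_lower_bound by blast
  obtain a where a: "a > 0" "\<And>v. a * (norm v)\<^sup>2 \<le> quad v"
    using quad_coercive by blast
  define R where "R = max 0 ((r + C) / a)"
  have "norm p \<le> R"
    if x: "norm x \<le> r" and \<tau>: "\<tau> \<in> taus" and le: "objective x \<tau> 0 \<le> objective x \<tau> p" for x \<tau> p
  proof -
    have "p \<bullet> x \<le> norm p * r"
      using norm_cauchy_schwarz[of p x] mult_left_mono[OF x, of "norm p"] by simp
    moreover have "- K \<tau> 0 \<le> p \<bullet> x - quad p - K \<tau> p"
      using le by (simp add: objective_eq_K quad_def)
    ultimately have "a * (norm p)\<^sup>2 \<le> norm p * (r + C)"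
      using a(2)[of p] C[OF \<tau>, of p] by (simp add: algebra_simps)
    then have "a * norm p \<le> r + C \<or> norm p = 0"
      by (auto simp: power2_eq_square mult.assoc)
    then show ?thesis
      using a(1) by (auto simp: R_def le_max_iff_disj pos_le_divide_eq mult.commute)
  qed
  then show ?thesis using that[of R] by (simp add: R_def)
qed

lemma objective_has_max:
  assumes "\<tau> \<in> taus"
  shows "\<exists>p. \<forall>q. objective x \<tau> q \<le> objective x \<tau> p"
proof -
  obtain R where "R \<ge> 0" and bounded:
    "\<And>x' \<tau>' p. norm x' \<le> norm x \<Longrightarrow> \<tau>' \<in> taus \<Longrightarrow> objective x' \<tau>' 0 \<le> objective x' \<tau>' p \<Longrightarrow> norm p \<le> R"
    using near_maximizers_bounded[of "norm x"] by blast
  with assms have R: "R \<ge> 0" "\<And>p. objective x \<tau> 0 \<le> objective x \<tau> p \<Longrightarrow> norm p \<le> R"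
    by auto
  have "continuous_on UNIV (\<lambda>p. p \<bullet> x - quad p)"
    unfolding quad_def
    by (intro continuous_intros linear_continuous_on matrix_vector_mul_bounded_linear)
  then have "continuous_on UNIV (\<lambda>p. p \<bullet> x - quad p - K \<tau> p)"
    using convex_on_continuous[OF open_UNIV K_convex[OF assms]] by (rule continuous_on_diff)
  then have "continuous_on (cball 0 R) (objective x \<tau>)"
    unfolding objective_eq_K[abs_def] by (rule continuous_on_subset) simp
  moreover have "cball 0 R \<noteq> {}" using R(1) by simp
  ultimately obtain p where p: "p \<in> cball 0 R" "\<And>q. q \<in> cball 0 R \<Longrightarrow> objective x \<tau> q \<le> objective x \<tau> p"
    using continuous_attains_sup[OF compact_cball] by blast
  have "objective x \<tau> q \<le> objective x \<tau> p" for q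
  proof (cases "objective x \<tau> 0 \<le> objective x \<tau> q")
    case True then show ?thesis using R(2) p(2) by simp
  next
    case False then show ?thesis using p(2)[of 0] R(1) by simp
  qed
  then show ?thesis by blast
qed

text \<open>Meaningful only for \<open>snd z \<in> taus\<close>; elsewhere an arbitrary value.\<close>
definition maximizer :: "(real^'d) \<times> (real^'m) \<Rightarrow> real^'d" where
  "maximizer z = (SOME p. \<forall>q. objective (fst z) (snd z) q \<le> objective (fst z) (snd z) p)"

lemma maximizer_max: "\<tau> \<in> taus \<Longrightarrow> objective x \<tau> q \<le> objective x \<tau> (maximizer (x, \<tau>))"
  unfolding maximizer_def using someI_ex[OF objective_has_max] by auto

lemma Phi_eq_max: "\<tau> \<in> taus \<Longrightarrow> Phi L \<gamma> G H x \<tau> = objective x \<tau> (maximizer (x, \<tau>))"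
  unfolding Phi_def objective_def[symmetric]
  by (rule cSup_eq_maximum) (auto intro: maximizer_max)

lemma quad_growth:
  assumes "\<tau> \<in> taus"
  shows "objective x \<tau> q \<le> objective x \<tau> (maximizer (x, \<tau>)) - quad (q - maximizer (x, \<tau>))"
  using quad_growth_at_max[OF K_convex[OF assms]] maximizer_max[OF assms]
  by (simp add: objective_eq_K)

lemma psi_lipschitz_on_cball:
  obtains \<Lambda> where "\<Lambda>-lipschitz_on (cball 0 R) psi"
proof -
  have "\<exists>C. C-lipschitz_on (cball 0 R) (H i)" for i
  proof -
    obtain C1 where "C1-lipschitz_on (cball 0 R) (H1 i)"
      using convex_on_lipschitz_on_cball[OF H1_convex[of i]] by blast
    moreover obtain C2 where "C2-lipschitz_on (cball 0 R) (H2 i)"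
      using convex_on_lipschitz_on_cball[OF H2_convex[of i]] by blast
    ultimately have "(C1 + C2)-lipschitz_on (cball 0 R) (\<lambda>p. H1 i p - H2 i p)"
      by (rule lipschitz_on_diff)
    then show ?thesis by (auto simp: H_def)
  qed
  then obtain C where "\<And>i. (C i)-lipschitz_on (cball 0 R) (H i)" by metis
  then have "(\<Sum>i\<in>UNIV. C i)-lipschitz_on (cball 0 R) (\<lambda>p. \<chi> i. H i p)"
    by (rule lipschitz_on_vec_lambda)
  from lipschitz_on_Pair[OF lipschitz_on_id this]
  have "(sqrt (1\<^sup>2 + (\<Sum>i\<in>UNIV. C i)\<^sup>2))-lipschitz_on (cball 0 R) psi"
    unfolding psi_def[abs_def] .
  then show ?thesis by (rule that)
qed

text \<open>Adding the quadratic growth at the two maximizers, the energies \<open>E\<close> cancel.\<close>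
lemma quad_maximizer_increment:
  assumes "\<tau> \<in> taus" "\<tau>' \<in> taus"
  shows "2 * quad (maximizer (x', \<tau>') - maximizer (x, \<tau>))
    \<le> (psi (maximizer (x', \<tau>')) - psi (maximizer (x, \<tau>))) \<bullet> ((x', \<tau>') - (x, \<tau>))"
proof -
  define p p' where "p = maximizer (x, \<tau>)" and "p' = maximizer (x', \<tau>')"
  have "objective x \<tau> p' \<le> objective x \<tau> p - quad (p' - p)"
    using quad_growth[OF assms(1)] by (simp add: p_def)
  moreover have "objective x' \<tau>' p \<le> objective x' \<tau>' p' - quad (p' - p)"
    using quad_growth[OF assms(2), of x' p] quad_uminus[of "p' - p"] by (simp add: p'_def)
  ultimately show ?thesis
    unfolding p_def[symmetric] p'_def[symmetric] objective_eq_psi inner_diff_left inner_diff_right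
    by linarith
qed

lemma maximizer_bounded:
  obtains R where "\<And>x \<tau>. norm x \<le> r \<Longrightarrow> \<tau> \<in> taus \<Longrightarrow> norm (maximizer (x, \<tau>)) \<le> R"
proof -
  obtain R where
    R: "\<And>x \<tau> p. norm x \<le> r \<Longrightarrow> \<tau> \<in> taus \<Longrightarrow> objective x \<tau> 0 \<le> objective x \<tau> p \<Longrightarrow> norm p \<le> R"
    using near_maximizers_bounded[of r] by metis
  show ?thesis
    using R[OF _ _ maximizer_max] that by metis
qed

lemma maximizer_lipschitz:
  obtains M where "M-lipschitz_on {z. norm (fst z) \<le> r \<and> snd z \<in> taus} maximizer"
proof -
  obtain R where R: "\<And>x \<tau>. norm x \<le> r \<Longrightarrow> \<tau> \<in> taus \<Longrightarrow> norm (maximizer (x, \<tau>)) \<le> R"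
    using maximizer_bounded[of r] by metis
  obtain \<Lambda> where \<Lambda>: "\<Lambda>-lipschitz_on (cball 0 R) psi"
    by (rule psi_lipschitz_on_cball)
  obtain a where a: "a > 0" "\<And>v. a * (norm v)\<^sup>2 \<le> quad v"
    using quad_coercive by blast
  have "(\<Lambda> / (2 * a))-lipschitz_on {z. norm (fst z) \<le> r \<and> snd z \<in> taus} maximizer"
  proof (rule lipschitz_onI)
    fix z z' :: "(real^'d) \<times> (real^'m)"
    assume "z \<in> {z. norm (fst z) \<le> r \<and> snd z \<in> taus}" "z' \<in> {z. norm (fst z) \<le> r \<and> snd z \<in> taus}"
    moreover obtain x \<tau> x' \<tau>' where z: "z = (x, \<tau>)" and z': "z' = (x', \<tau>')"
      by (cases z, cases z')
    ultimately have "norm x \<le> r" "\<tau> \<in> taus" "norm x' \<le> r" "\<tau>' \<in> taus" by simp_all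
    define n where "n = norm (maximizer z' - maximizer z)"
    have "2 * a * n\<^sup>2 \<le> 2 * quad (maximizer z' - maximizer z)"
      using a(2)[of "maximizer z' - maximizer z"] by (simp add: n_def)
    also have "\<dots> \<le> (psi (maximizer z') - psi (maximizer z)) \<bullet> (z' - z)"
      using quad_maximizer_increment[OF \<open>\<tau> \<in> taus\<close> \<open>\<tau>' \<in> taus\<close>, of x' x] by (simp add: z z')
    also have "\<dots> \<le> norm (psi (maximizer z') - psi (maximizer z)) * norm (z' - z)"
      by (rule norm_cauchy_schwarz)
    also have "\<dots> \<le> \<Lambda> * n * norm (z' - z)"
      using lipschitz_on_normD[OF \<Lambda>, of "maximizer z'" "maximizer z"] R z z' \<open>\<tau> \<in> taus\<close> \<open>\<tau>' \<in> taus\<close>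
        \<open>norm x \<le> r\<close> \<open>norm x' \<le> r\<close>
      by (intro mult_right_mono) (auto simp: n_def)
    finally have "n * (2 * a * n) \<le> n * (\<Lambda> * norm (z' - z))"
      by (simp add: power2_eq_square algebra_simps)
    moreover have "n \<ge> 0" "\<Lambda> \<ge> 0" using lipschitz_on_nonneg[OF \<Lambda>] by (auto simp: n_def)
    ultimately have "2 * a * n \<le> \<Lambda> * norm (z' - z)"
      by (cases "n = 0") (auto dest: mult_left_le_imp_le)
    then have "n \<le> \<Lambda> / (2 * a) * norm (z' - z)"
      using a(1) by (simp add: pos_le_divide_eq mult.commute)
    then show "dist (maximizer z) (maximizer z') \<le> \<Lambda> / (2 * a) * dist z z'"
      by (simp add: n_def dist_norm norm_minus_commute)
  next
    show "0 \<le> \<Lambda> / (2 * a)" using lipschitz_on_nonneg[OF \<Lambda>] a(1) by simp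
  qed
  then show ?thesis by (rule that)
qed

lemma psi_maximizer_lipschitz:
  obtains M where "M-lipschitz_on {z. norm (fst z) \<le> r \<and> snd z \<in> taus} (\<lambda>z. psi (maximizer z))"
proof -
  define Z :: "((real^'d) \<times> (real^'m)) set" where "Z = {z. norm (fst z) \<le> r \<and> snd z \<in> taus}"
  obtain R where R: "\<And>x \<tau>. norm x \<le> r \<Longrightarrow> \<tau> \<in> taus \<Longrightarrow> norm (maximizer (x, \<tau>)) \<le> R"
    using maximizer_bounded[of r] by metis
  then have image: "maximizer ` Z \<subseteq> cball 0 R"
    by (auto simp: Z_def)
  obtain \<Lambda> where \<Lambda>: "\<Lambda>-lipschitz_on (cball 0 R) psi"
    by (rule psi_lipschitz_on_cball)
  obtain M where M: "M-lipschitz_on Z maximizer"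
    unfolding Z_def by (rule maximizer_lipschitz)
  have "(\<Lambda> * M)-lipschitz_on Z (\<lambda>z. psi (maximizer z))"
    by (rule lipschitz_on_compose2[OF M lipschitz_on_subset[OF \<Lambda> image]])
  then show ?thesis unfolding Z_def by (rule that)
qed

lemma psi_maximizer_local_lipschitz:
  obtains M where "M-lipschitz_on (ball z 1 \<inter> (UNIV \<times> taus)) (\<lambda>w. psi (maximizer w))"
proof -
  obtain M where M: "M-lipschitz_on {w. norm (fst w) \<le> norm (fst z) + 1 \<and> snd w \<in> taus} (\<lambda>w. psi (maximizer w))"
    by (rule psi_maximizer_lipschitz)
  have "norm (fst w) \<le> norm (fst z) + 1" if "w \<in> ball z 1" for w
    using norm_triangle_ineq2[of "fst w" "fst z"] dist_fst_le[of w z] that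
    by (simp add: dist_norm norm_minus_commute)
  then have "ball z 1 \<inter> (UNIV \<times> taus) \<subseteq> {w. norm (fst w) \<le> norm (fst z) + 1 \<and> snd w \<in> taus}"
    by auto
  from lipschitz_on_subset[OF M this] show ?thesis by (rule that)
qed

lemma Phi_has_derivative:
  assumes "z \<in> UNIV \<times> taus"
  shows "((\<lambda>z. Phi L \<gamma> G H (fst z) (snd z)) has_derivative (\<lambda>h. psi (maximizer z) \<bullet> h)) (at z)"
proof -
  define U where "U = ball z 1 \<inter> (UNIV \<times> taus)"
  have U: "open U" "z \<in> U"
    using assms open_taus by (simp_all add: U_def open_Int open_Times)
  obtain M where "M-lipschitz_on U (\<lambda>w. psi (maximizer w))"
    unfolding U_def by (rule psi_maximizer_local_lipschitz)
  moreover have "psi q \<bullet> w - E q \<le> psi (maximizer w) \<bullet> w - E (maximizer w)" if "w \<in> U" for w q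
  proof -
    have "snd w \<in> taus" using that by (simp add: U_def mem_Times_iff)
    from maximizer_max[OF this, of "fst w" q] show ?thesis by (simp add: objective_eq_psi)
  qed
  ultimately have "((\<lambda>w. psi (maximizer w) \<bullet> w - E (maximizer w)) has_derivative (\<lambda>h. psi (maximizer z) \<bullet> h)) (at z)"
    by (rule max_affine_has_derivative[OF U])
  then show ?thesis
  proof (rule has_derivative_transform_within_open[OF _ U])
    fix w assume "w \<in> U"
    then have "snd w \<in> taus" by (simp add: U_def mem_Times_iff)
    from Phi_eq_max[OF this, of "fst w"]
    show "psi (maximizer w) \<bullet> w - E (maximizer w) = Phi L \<gamma> G H (fst w) (snd w)"
      by (simp add: objective_eq_psi)
  qed
qed

lemma Phi_C11: "C11_on (UNIV \<times> taus) (\<lambda>z. Phi L \<gamma> G H (fst z) (snd z))"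
  unfolding C11_on_def
proof (intro exI[of _ "\<lambda>z. psi (maximizer z)"] conjI ballI)
  fix z :: "(real^'d) \<times> (real^'m)" assume "z \<in> UNIV \<times> taus"
  then show "((\<lambda>z. Phi L \<gamma> G H (fst z) (snd z)) has_derivative (\<lambda>h. psi (maximizer z) \<bullet> h)) (at z)"
    by (rule Phi_has_derivative)
  obtain M where "M-lipschitz_on (ball z 1 \<inter> (UNIV \<times> taus)) (\<lambda>w. psi (maximizer w))"
    by (rule psi_maximizer_local_lipschitz)
  then show "\<exists>e>0. \<exists>C. C-lipschitz_on (ball z e \<inter> (UNIV \<times> taus)) (\<lambda>w. psi (maximizer w))"
    by (intro exI[of _ 1]) auto
qed

lemma objective_shift: "objective y \<tau> q = objective x \<tau> q + q \<bullet> (y - x)"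
  unfolding objective_def by (simp add: inner_diff_right)

lemma Phi_convex:
  assumes "\<tau> \<in> taus"
  shows "convex_on UNIV (\<lambda>x. Phi L \<gamma> G H x \<tau>)"
proof (rule convex_on_supportingI[where g = "\<lambda>x. maximizer (x, \<tau>)"])
  fix x y
  have "objective y \<tau> (maximizer (x, \<tau>)) \<le> objective y \<tau> (maximizer (y, \<tau>))"
    by (rule maximizer_max[OF assms])
  then show "Phi L \<gamma> G H x \<tau> + maximizer (x, \<tau>) \<bullet> (y - x) \<le> Phi L \<gamma> G H y \<tau>"
    by (simp add: Phi_eq_max[OF assms] objective_shift[of y \<tau> _ x])
qed

lemma Phi_upper_quadratic:
  assumes "\<tau> \<in> taus"
  shows "Phi L \<gamma> G H y \<tau> \<le> Phi L \<gamma> G H x \<tau> + maximizer (x, \<tau>) \<bullet> (y - x)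
           + (1/2) * ((y - x) \<bullet> (matrix_inv A *v (y - x)))"
proof -
  define p where "p = maximizer (x, \<tau>)"
  have "objective y \<tau> q \<le> objective x \<tau> p + p \<bullet> (y - x) + (1/2) * ((y - x) \<bullet> (matrix_inv A *v (y - x)))" for q
  proof -
    have "objective y \<tau> q = objective x \<tau> q + p \<bullet> (y - x) + (q - p) \<bullet> (y - x)"
      by (simp add: objective_shift[of y \<tau> q x] inner_diff_left)
    moreover have "objective x \<tau> q \<le> objective x \<tau> p - quad (q - p)"
      using quad_growth[OF assms] by (simp add: p_def)
    moreover have "(q - p) \<bullet> (y - x) - quad (q - p) \<le> (1/2) * ((y - x) \<bullet> (matrix_inv A *v (y - x)))"
      by (rule inner_minus_quad_le)
    ultimately show ?thesis by linarith
  qed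
  then show ?thesis
    using Phi_eq_max[OF assms] by (simp add: p_def)
qed

lemma Phi_hess_le:
  assumes "\<tau> \<in> taus"
  shows "hess_le (\<lambda>x. Phi L \<gamma> G H x \<tau>) (matrix_inv A)"
  unfolding hess_le_def
proof (rule convex_on_supportingI
    [where g = "\<lambda>x. (1/2) *\<^sub>R (matrix_inv A *v x + x v* matrix_inv A) - maximizer (x, \<tau>)"])
  fix x y
  define B where "B = matrix_inv A"
  have "((1/2) *\<^sub>R (B *v x + x v* B) - maximizer (x, \<tau>)) \<bullet> (y - x)
      = (1/2) * ((B *v x + x v* B) \<bullet> (y - x)) - maximizer (x, \<tau>) \<bullet> (y - x)"
    by (simp add: inner_diff_left)
  then show "(1/2) * (x \<bullet> (matrix_inv A *v x)) - Phi L \<gamma> G H x \<tau>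
      + ((1/2) *\<^sub>R (matrix_inv A *v x + x v* matrix_inv A) - maximizer (x, \<tau>)) \<bullet> (y - x)
      \<le> (1/2) * (y \<bullet> (matrix_inv A *v y)) - Phi L \<gamma> G H y \<tau>"
    using Phi_upper_quadratic[OF assms, of y x] inner_matrix_vector_expand[of y B x]
    unfolding B_def by linarith
qed

end

theorem lemma2p4:
  fixes H H1 H2 :: "'m::finite \<Rightarrow> real^'d \<Rightarrow> real"
    and L G :: "real^'d \<Rightarrow> real"
    and A :: "real^'d^'d"
    and \<gamma> :: real
  assumes H1_convex: "\<And>i. convex_on UNIV (H1 i)"
    and H2_convex: "\<And>i. convex_on UNIV (H2 i)"
    and H_def: "\<And>i p. H i p = H1 i p - H2 i p"
    and G_def: "\<And>p. G p = (\<Sum>i\<in>UNIV. H1 i p + H2 i p)"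
    and gamma_pos: "\<gamma> > 0"
    and A_sym: "transpose A = A"
    and A_posdef: "\<And>v. v \<noteq> 0 \<Longrightarrow> v \<bullet> (A *v v) > 0"
    and L_hess: "hess_ge L A"
  shows "C11_on (UNIV \<times> {\<tau>::real^'m. \<forall>i. -\<gamma> < \<tau> $ i \<and> \<tau> $ i < \<gamma>})
            (\<lambda>z. Phi L \<gamma> G H (fst z) (snd z)) \<and>
         (\<forall>\<tau>::real^'m. (\<forall>i. -\<gamma> < \<tau> $ i \<and> \<tau> $ i < \<gamma>) \<longrightarrow>
           (convex_on UNIV (\<lambda>x. Phi L \<gamma> G H x \<tau>) \<and>
           hess_le (\<lambda>x. Phi L \<gamma> G H x \<tau>) (matrix_inv A))) \<and>
         (\<forall>x \<tau>::real^'m. (\<forall>i. -\<gamma> < \<tau> $ i \<and> \<tau> $ i < \<gamma>) \<longrightarrow>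
           (\<exists>Dx. ((\<lambda>y. Phi L \<gamma> G H y \<tau>) has_derivative (\<lambda>h. Dx \<bullet> h)) (at x) \<and>
             (\<forall>i. ((\<lambda>t. Phi L \<gamma> G H x (\<tau> + t *\<^sub>R axis i 1)) has_real_derivative H i Dx) (at 0))))"
proof -
  interpret value_function A H H1 H2 L G \<gamma>
    using assms by unfold_locales auto
  have partial_derivatives:
    "\<exists>Dx. ((\<lambda>y. Phi L \<gamma> G H y \<tau>) has_derivative (\<lambda>h. Dx \<bullet> h)) (at x) \<and>
      (\<forall>i. ((\<lambda>t. Phi L \<gamma> G H x (\<tau> + t *\<^sub>R axis i 1)) has_real_derivative H i Dx) (at 0))"
    if "\<tau> \<in> taus" for x \<tau>
  proof -
    define p where "p = maximizer (x, \<tau>)"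
    have "((\<lambda>z. Phi L \<gamma> G H (fst z) (snd z)) has_derivative (\<lambda>h. (p, \<chi> i. H i p) \<bullet> h)) (at (x, \<tau>))"
      using Phi_has_derivative[of "(x, \<tau>)"] that by (simp add: p_def psi_def)
    note slices = has_derivative_Pair_slices[OF this]
    show ?thesis
      using slices(1) slices(2)[of "axis _ 1"] by (auto simp: inner_axis)
  qed
  show ?thesis
    using Phi_C11 Phi_convex Phi_hess_le partial_derivatives unfolding taus_def by blast
qed

end
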